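(* In the setting described in the context, suppose $T_{\mathrm{renorm}}\ge\ln\!\big(\frac{b_2\|f\|_\infty T_{\mathrm{sel}}}{b_1}\big)(b_2a_0)^{-1}$ and the bounded-flux assumption holds. Then for all $t\in[T^0_1,T^2_M]$ and $j\in\bar J_n$, $s_0-w^j(T^0_1)\Phi^j(t)\ge\delta$.
   Context: Let $I$ be a finite set, $n\in\{1,\dots,|I|\}$, $J_n$ the set of $n$-element subsets of $I$. Input concentrations $x^i\ge0$, $i\in I$, are prescribed functions of time, continuous on $[0,T_{\mathrm{sel}}]$; flux $\Phi^j(t):=\prod_{i\in j}x^i(t)$. Positive constants $a_0,b_1,b_2,s_0,\theta,\rho,T_{\mathrm{sel}},T_{\mathrm{renorm}}$; $f:[0,\infty)\to[0,\infty)$ continuous, $f\equiv0$ on $[0,\theta]$, increasing on $(\theta,\theta+\rho)$, $f\equiv\|f\|_\infty$ on $[\theta+\rho,\infty)$. $\bar J_n$ (assumed nonempty) is the set of $j\in J_n$ such that $\Phi^j>\theta$ on some $[t_0,t_1]\subset[0,T_{\mathrm{sel}}]$ with $t_0<t_1$. $T^0_1:=T_{\mathrm{sel}}+T_{\mathrm{renorm}}$. For $j\in\bar J_n$: $w^j(0)=0$, $\dot w^j=f(\Phi^j)$ on $[0,T_{\mathrm{sel}}]$, $\dot w^j=a_0(b_1-b_2w^j)$ on $[T_{\mathrm{sel}},T^0_1]$, and $w^j$ is constant afterwards (so $x^j(t):=w^j(T^0_1)\Phi^j(t)$ for $t\ge T^0_1$). $T^2_M>T^0_1$ denotes the end of the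 learning phase. Bounded-flux assumption: there is $\alpha>0$ with $\sup_{j\in\bar J_n,\,t\in[T^0_1,T^2_M]}\Phi^j(t)\le\alpha$, and $\delta:=s_0-2\frac{b_1}{b_2}\alpha>0$. *)

theory Defs
  imports "HOL-Analysis.Analysis"
begin

text \<open>Flux of a reaction j (an n-element subset of inputs): product of input concentrations.\<close>
definition Phi :: "('i \<Rightarrow> real \<Rightarrow> real) \<Rightarrow> 'i set \<Rightarrow> real \<Rightarrow> real" where
  "Phi x j t = (\<Prod>i\<in>j. x i t)"

definition Jn :: "'i set \<Rightarrow> nat \<Rightarrow> 'i set set" where
  "Jn I n = {j. j \<subseteq> I \<and> card j = n}"

definition Jbar :: "'i set \<Rightarrow> nat \<Rightarrow> ('i \<Rightarrow> real \<Rightarrow> real) \<Rightarrow> real \<Rightarrow> real \<Rightarrow> 'i set set" where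
  "Jbar I n x \<theta> Tsel = {j \<in> Jn I n. \<exists>t0 t1. 0 \<le> t0 \<and> t0 < t1 \<and> t1 \<le> Tsel \<and>
                                  (\<forall>t\<in>{t0..t1}. Phi x j t > \<theta>)}"

end

theory Submission
  imports Defs
begin

text \<open>During selection the weight grows at rate at most \<open>\<parallel>f\<parallel>\<^sub>\<infinity>\<close>, so \<open>w\<^sup>j(T\<^sub>s\<^sub>e\<^sub>l) \<le> \<parallel>f\<parallel>\<^sub>\<infinity> T\<^sub>s\<^sub>e\<^sub>l\<close>.
  Renormalisation is the linear relaxation \<open>w' = a\<^sub>0 b\<^sub>2 (b\<^sub>1/b\<^sub>2 - w)\<close>, which contracts the
  excess over the equilibrium \<open>b\<^sub>1/b\<^sub>2\<close> by the factor \<open>exp (-a\<^sub>0 b\<^sub>2 T\<^sub>r\<^sub>e\<^sub>n\<^sub>o\<^sub>r\<^sub>m)\<close>; the lower bound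
  on \<open>T\<^sub>r\<^sub>e\<^sub>n\<^sub>o\<^sub>r\<^sub>m\<close> makes the remaining excess at most \<open>b\<^sub>1/b\<^sub>2\<close>. Hence \<open>w\<^sup>j(T\<^sup>0\<^sub>1) \<le> 2b\<^sub>1/b\<^sub>2\<close>,
  and multiplying by a flux in \<open>[0, \<alpha>]\<close> gives the claim.\<close>

lemma Phi_nonneg:
  assumes "j \<subseteq> I" "\<And>i. i \<in> I \<Longrightarrow> 0 \<le> x i t"
  shows "0 \<le> Phi x j t"
  using assms by (auto simp: Phi_def intro!: prod_nonneg)

lemma bdd_above_image_if_eventually_const:
  fixes f :: "real \<Rightarrow> real"
  assumes cont: "continuous_on {a..} f" and "a \<le> c"
    and const: "\<And>u. c \<le> u \<Longrightarrow> f u = f c"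
  shows "bdd_above (f ` {a..})"
proof -
  have "f ` {a..} \<subseteq> f ` {a..c}"
  proof
    fix y assume "y \<in> f ` {a..}"
    then obtain u where "a \<le> u" "y = f u" by auto
    then show "y \<in> f ` {a..c}"
      using \<open>a \<le> c\<close> const[of u] by (cases "u \<le> c") auto
  qed
  moreover have "compact (f ` {a..c})"
    using cont by (intro compact_continuous_image) (auto intro: continuous_on_subset)
  ultimately show ?thesis
    by (meson bdd_above_mono bounded_imp_bdd_above compact_imp_bounded)
qed

lemma increment_le_if_deriv_le:
  fixes w w' :: "real \<Rightarrow> real"
  assumes "a \<le> b"
    and deriv: "\<And>t. t \<in> {a..b} \<Longrightarrow> (w has_real_derivative w' t) (at t within {a..b})"
    and bound: "\<And>t. t \<in> {a..b} \<Longrightarrow> w' t \<le> M"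
  shows "w b - w a \<le> M * (b - a)"
proof -
  obtain s where s: "s \<in> {a..b}" and "w b - w a = (b - a) * w' s"
    using mvt_very_simple[OF \<open>a \<le> b\<close>, of w "\<lambda>t h. h * w' t"] deriv
    by (auto simp: has_real_derivative_iff_has_vector_derivative has_vector_derivative_def
        mult.commute)
  then show ?thesis
    using bound[OF s] \<open>a \<le> b\<close> by (simp add: mult.commute mult_right_mono)
qed

lemma relaxation_ode_solution:
  fixes w :: "real \<Rightarrow> real"
  assumes "t0 \<le> t1"
    and deriv: "\<And>t. t \<in> {t0..t1} \<Longrightarrow>
                  (w has_real_derivative k * (c - w t)) (at t within {t0..t1})"
  shows "w t1 = c + (w t0 - c) * exp (- k * (t1 - t0))"
proof -
  define g where "g t = (w t - c) * exp (k * (t - t0))" for t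
  have "(g has_real_derivative 0) (at t within {t0..t1})" if "t \<in> {t0..t1}" for t
  proof -
    have "(g has_real_derivative
            k * (c - w t) * exp (k * (t - t0)) + (w t - c) * (exp (k * (t - t0)) * k))
          (at t within {t0..t1})"
      unfolding g_def by (auto intro!: derivative_eq_intros deriv[OF that])
    then show ?thesis by (simp add: algebra_simps)
  qed
  then obtain C where "\<And>t. t \<in> {t0..t1} \<Longrightarrow> g t = C"
    by (metis has_field_derivative_zero_constant convex_real_interval(5))
  then have "g t1 = g t0" using \<open>t0 \<le> t1\<close> by simp
  then have "(w t1 - c) * exp (k * (t1 - t0)) = w t0 - c"
    by (simp add: g_def)
  then have "(w t1 - c) * (exp (k * (t1 - t0)) * exp (- (k * (t1 - t0))))
             = (w t0 - c) * exp (- k * (t1 - t0))"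
    by (metis mult.assoc mult_minus_left)
  then show ?thesis
    by (simp add: exp_minus_inverse)
qed

text \<open>No case split on the sign of \<open>M\<close> is needed: below the equilibrium the weight stays below
  it, and above it \<open>M > c > 0\<close>, so the logarithm is taken of a number \<open>> 1\<close>.\<close>

lemma relaxation_le_twice_equilibrium:
  fixes k c w0 M \<tau> :: real
  assumes "k > 0" "c > 0" "w0 \<le> M" and \<tau>: "ln (M / c) / k \<le> \<tau>"
  shows "c + (w0 - c) * exp (- k * \<tau>) \<le> 2 * c"
proof (cases "w0 \<le> c")
  case True
  then show ?thesis
    using \<open>c > 0\<close> by (smt (verit) exp_gt_zero mult_nonpos_nonneg)
next
  case False
  then have "M / c > 0" using assms by simp
  moreover have "ln (M / c) \<le> k * \<tau>"
    using \<tau> \<open>k > 0\<close> by (simp add: divide_le_eq mult.commute)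
  ultimately have "M / c \<le> exp (k * \<tau>)"
    by (metis exp_le_cancel_iff exp_ln)
  then have "M * exp (- k * \<tau>) \<le> c"
    using \<open>c > 0\<close> by (simp add: exp_minus field_simps)
  moreover have "(w0 - c) * exp (- k * \<tau>) \<le> M * exp (- k * \<tau>)"
    using \<open>w0 \<le> M\<close> \<open>c > 0\<close> by (intro mult_right_mono) auto
  ultimately show ?thesis by linarith
qed

theorem proposition18:
  fixes I :: "'i set" and n :: nat
    and x :: "'i \<Rightarrow> real \<Rightarrow> real"
    and f :: "real \<Rightarrow> real"
    and w :: "'i set \<Rightarrow> real \<Rightarrow> real"
    and a0 b1 b2 s0 \<theta> \<rho> Tsel Trenorm T2M \<alpha> :: real
  assumes finI: "finite I"
    and n_range: "1 \<le> n" "n \<le> card I"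
    and x_nonneg: "\<And>i t. i \<in> I \<Longrightarrow> 0 \<le> t \<Longrightarrow> 0 \<le> x i t"
    and x_cont: "\<And>i. i \<in> I \<Longrightarrow> continuous_on {0..Tsel} (x i)"
    and pos: "a0 > 0" "b1 > 0" "b2 > 0" "s0 > 0" "\<theta> > 0" "\<rho> > 0" "Tsel > 0" "Trenorm > 0"
    and f_nonneg: "\<And>u. 0 \<le> u \<Longrightarrow> 0 \<le> f u"
    and f_cont: "continuous_on {0..} f"
    and f_zero: "\<And>u. 0 \<le> u \<Longrightarrow> u \<le> \<theta> \<Longrightarrow> f u = 0"
    and f_incr: "strict_mono_on {\<theta><..<\<theta>+\<rho>} f"
    and f_sat: "\<And>u. \<theta> + \<rho> \<le> u \<Longrightarrow> f u = (SUP v\<in>{0..}. f v)"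
    and Jbar_ne: "Jbar I n x \<theta> Tsel \<noteq> {}"
    and w_init: "\<And>j. j \<in> Jbar I n x \<theta> Tsel \<Longrightarrow> w j 0 = 0"
    and w_sel: "\<And>j t. j \<in> Jbar I n x \<theta> Tsel \<Longrightarrow> t \<in> {0..Tsel} \<Longrightarrow>
                  (w j has_real_derivative f (Phi x j t)) (at t within {0..Tsel})"
    and w_renorm: "\<And>j t. j \<in> Jbar I n x \<theta> Tsel \<Longrightarrow> t \<in> {Tsel..Tsel + Trenorm} \<Longrightarrow>
                  (w j has_real_derivative a0 * (b1 - b2 * w j t)) (at t within {Tsel..Tsel + Trenorm})"
    and w_const: "\<And>j t. j \<in> Jbar I n x \<theta> Tsel \<Longrightarrow> t \<ge> Tsel + Trenorm \<Longrightarrow>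
                  w j t = w j (Tsel + Trenorm)"
    and T2M_gt: "T2M > Tsel + Trenorm"
    and Trenorm_bound: "Trenorm \<ge> ln (b2 * (SUP v\<in>{0..}. f v) * Tsel / b1) / (b2 * a0)"
    and alpha_pos: "\<alpha> > 0"
    and flux_bound: "\<And>j t. j \<in> Jbar I n x \<theta> Tsel \<Longrightarrow> t \<in> {Tsel + Trenorm..T2M} \<Longrightarrow> Phi x j t \<le> \<alpha>"
    and delta_pos: "s0 - 2 * (b1 / b2) * \<alpha> > 0"
  shows "\<forall>t\<in>{Tsel + Trenorm..T2M}. \<forall>j\<in>Jbar I n x \<theta> Tsel.
           s0 - w j (Tsel + Trenorm) * Phi x j t \<ge> s0 - 2 * (b1 / b2) * \<alpha>"
proof (intro ballI)
  fix t j assume t: "t \<in> {Tsel + Trenorm..T2M}" and j: "j \<in> Jbar I n x \<theta> Tsel"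
  define F where "F = (SUP v\<in>{0..}. f v)"
  have "j \<subseteq> I" using j by (simp add: Jbar_def Jn_def)
  then have Phi_j_nonneg: "0 \<le> Phi x j s" if "0 \<le> s" for s
    using x_nonneg that by (intro Phi_nonneg) auto
  have "bdd_above (f ` {0..})"
    using pos f_sat[of "\<theta> + \<rho>"]
    by (intro bdd_above_image_if_eventually_const[OF f_cont, of "\<theta> + \<rho>"]) (auto simp: f_sat)
  then have f_le_F: "f u \<le> F" if "0 \<le> u" for u
    using that by (auto simp: F_def intro: cSUP_upper)
  have "w j Tsel - w j 0 \<le> F * (Tsel - 0)"
    using pos w_sel[OF j] f_le_F Phi_j_nonneg by (intro increment_le_if_deriv_le) auto
  then have selection: "w j Tsel \<le> F * Tsel" using w_init[OF j] by simp
  have relaxation: "(w j has_real_derivative (a0 * b2) * (b1 / b2 - w j s))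
                      (at s within {Tsel..Tsel + Trenorm})" if "s \<in> {Tsel..Tsel + Trenorm}" for s
  proof -
    have "a0 * (b1 - b2 * w j s) = (a0 * b2) * (b1 / b2 - w j s)"
      using pos by (simp add: field_simps)
    then show ?thesis using w_renorm[OF j that] by metis
  qed
  have "w j (Tsel + Trenorm) = b1 / b2 + (w j Tsel - b1 / b2) * exp (- (a0 * b2) * Trenorm)"
    using relaxation_ode_solution[OF _ relaxation] pos by simp
  also have "\<dots> \<le> 2 * (b1 / b2)"
    using pos selection Trenorm_bound
    by (intro relaxation_le_twice_equilibrium) (auto simp: F_def mult.commute mult.left_commute)
  finally have "w j (Tsel + Trenorm) \<le> 2 * (b1 / b2)" .
  moreover have "0 \<le> Phi x j t" "Phi x j t \<le> \<alpha>"
    using Phi_j_nonneg flux_bound[OF j t] t pos by auto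
  ultimately have "w j (Tsel + Trenorm) * Phi x j t \<le> 2 * (b1 / b2) * \<alpha>"
    using pos by (smt (verit) mult_mono mult_nonpos_nonneg divide_pos_pos)
  then show "s0 - w j (Tsel + Trenorm) * Phi x j t \<ge> s0 - 2 * (b1 / b2) * \<alpha>" by simp
qed

end
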